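(* For all $n\in\mathbb N$: $\mathsf d_n\otimes\mathsf I_n\mathrel{;}\mathsf I_n\otimes\mathsf e_n\ \sim\ \mathsf I_n\ \sim\ \mathsf I_n\otimes\mathsf d_n\mathrel{;}\mathsf e_n\otimes\mathsf I_n$, where $\otimes$ binds tighter than $;$.
   Context: Wire calculus. Fix a set $\Sigma$ of signals and $\iota\notin\Sigma$; $L=\Sigma\cup\{\iota\}$; $\vec\iota$ denotes a word of $\iota$'s. Prefix strings are words over atoms: signal variables $x$, binders $\lambda x$, $\iota$, constants $\sigma\in\Sigma$. Terms: $P::= Y \mid P\mathrel{;}P\mid P\otimes P\mid \frac{u}{v}.P\mid P+P\mid \mu Y{:}\tau.P$ ($\tau$ a sort $(k,l)$). In $\frac{u}{v}.P$, variables $x$ with $\lambda x$ in $uv$ are bound (set $bd$). Sorting: $P:(k,n),R:(n,l)\Rightarrow P\mathrel{;}R:(k,l)$; $P:(k,l),Q:(m,n)\Rightarrow P\otimes Q:(k+m,l+n)$; $\frac{u}{v}.P:(|u|,|v|)$ when $P$ has that sort; $\mu Y{:}\tau.P:\tau$; $P+Q:\tau$ for $P,Q:\tau$. Closed terms only. Transitions $P\xrightarrow[\vec b]{\vec a}Q$ are generated by: (Refl) $P\xrightarrow[\vec\iota]{\vec\iota}P$; ($\iota$L) $P\xrightarrow[\vec\iota]{\vec\iota}R\xrightarrow[\vec b]{\vec a}Q$ gives $P\xrightarrow[\vec b]{\vec a}Q$; ($\iota$R) $P\xrightarrow[\vec b]{\vec a}R\xrightarrow[\vec\iota]{\vec\iota}Q$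 gives $P\xrightarrow[\vec b]{\vec a}Q$; (Cut) $P\xrightarrow[\vec c]{\vec a}Q$, $R\xrightarrow[\vec b]{\vec c}S$ give $P\mathrel{;}R\xrightarrow[\vec b]{\vec a}Q\mathrel{;}S$; (Ten) $P\xrightarrow[\vec b]{\vec a}Q$, $R\xrightarrow[\vec d]{\vec c}S$ give $P\otimes R\xrightarrow[\vec b\vec d]{\vec a\vec c}Q\otimes S$; (Pref) for each $\sigma:bd\to L$, $\frac{u}{v}.P\xrightarrow[v|_\sigma]{u|_\sigma}P|_\sigma$; (Rec) $P[\mu Y.P/Y]\xrightarrow[\vec b]{\vec a}Q$ gives $\mu Y.P\xrightarrow[\vec b]{\vec a}Q$; ($+\iota$) $P\xrightarrow[\vec\iota]{\vec\iota}Q$, $R\xrightarrow[\vec\iota]{\vec\iota}S$ give $P+R\xrightarrow[\vec\iota]{\vec\iota}Q+S$; ($+$L/R) $P\xrightarrow[\vec b]{\vec a}Q$ with $\vec a\vec b$ not all $\iota$ gives $P+R\xrightarrow[\vec b]{\vec a}Q$ and $R+P\xrightarrow[\vec b]{\vec a}Q$. Bisimilarity $\sim$: $P\sim Q$ iff some relation $S\ni(P,Q)$ satisfies: if $(P',Q')\in S$ and $P'\xrightarrow[\vec b]{\vec a}P''$ then $Q'\xrightarrow[\vec b]{\vec a}Q''$ with $(P'',Q'')\in S$, and symmetrically. Constants: $\mathsf I_k=\mu Y.\frac{\lambda x_1\cdots\lambda x_k}{\lambda x_1\cdots\lambda x_k}.Y:(k,k)$, $\mathsf I=\mathsf I_1$;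 $\mathsf d=\mu Y.\frac{\epsilon}{\lambda x\lambda x}.Y:(0,2)$; $\mathsf e=\mu Y.\frac{\lambda x\lambda x}{\epsilon}.Y:(2,0)$ ($\epsilon$ empty string). Recursively: $\mathsf d_1=\mathsf d$, $\mathsf d_{n+1}=\mathsf d\mathrel{;}(\mathsf I\otimes\mathsf d_n\otimes\mathsf I)$; $\mathsf e_1=\mathsf e$, $\mathsf e_{n+1}=(\mathsf I_n\otimes\mathsf e\otimes\mathsf I_n)\mathrel{;}\mathsf e_n$; and $\mathsf d_0=\mathsf e_0=\mathsf I_0=0:=\mu Y{:}(0,0).Y$. So $\mathsf d_n:(0,2n)$, $\mathsf e_n:(2n,0)$. *)

theory Defs
  imports Main
begin

text \<open>Signals are elements of the type 's; a label in L = Sigma + {iota} is an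
  "'s option", where None stands for iota and Some s for the signal s.\<close>

type_synonym 's lab = "'s option"

datatype 's atom =
    AVar nat
  | ABind nat
  | AIota
  | AConst 's

datatype 's wterm =
    TVar nat
  | Seq "'s wterm" "'s wterm"
  | Ten "'s wterm" "'s wterm"
  | Pref "'s atom list" "'s atom list" "'s wterm"
  | Plus "'s wterm" "'s wterm"
  | Mu nat "nat \<times> nat" "'s wterm"

fun binders :: "'s atom list \<Rightarrow> nat set" where
  "binders [] = {}"
| "binders (ABind x # w) = insert x (binders w)"
| "binders (_ # w) = binders w"

definition bd :: "'s atom list \<Rightarrow> 's atom list \<Rightarrow> nat set" where
  "bd u v = binders u \<union> binders v"

fun inst_atom :: "(nat \<Rightarrow> 's lab) \<Rightarrow> 's atom \<Rightarrow> 's lab" where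
  "inst_atom \<sigma> (AVar x) = \<sigma> x"
| "inst_atom \<sigma> (ABind x) = \<sigma> x"
| "inst_atom \<sigma> AIota = None"
| "inst_atom \<sigma> (AConst s) = Some s"

definition inst_word :: "(nat \<Rightarrow> 's lab) \<Rightarrow> 's atom list \<Rightarrow> 's lab list" where
  "inst_word \<sigma> w = map (inst_atom \<sigma>) w"

fun lab_atom :: "'s lab \<Rightarrow> 's atom" where
  "lab_atom None = AIota"
| "lab_atom (Some s) = AConst s"

fun subst_atom :: "(nat \<Rightarrow> 's lab) \<Rightarrow> nat set \<Rightarrow> 's atom \<Rightarrow> 's atom" where
  "subst_atom \<sigma> B (AVar x) = (if x \<in> B then lab_atom (\<sigma> x) else AVar x)"
| "subst_atom \<sigma> B a = a"

fun subst_sig :: "(nat \<Rightarrow> 's lab) \<Rightarrow> nat set \<Rightarrow> 's wterm \<Rightarrow> 's wterm" where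
  "subst_sig \<sigma> B (TVar Y) = TVar Y"
| "subst_sig \<sigma> B (Seq P R) = Seq (subst_sig \<sigma> B P) (subst_sig \<sigma> B R)"
| "subst_sig \<sigma> B (Ten P R) = Ten (subst_sig \<sigma> B P) (subst_sig \<sigma> B R)"
| "subst_sig \<sigma> B (Plus P R) = Plus (subst_sig \<sigma> B P) (subst_sig \<sigma> B R)"
| "subst_sig \<sigma> B (Mu Y \<tau> P) = Mu Y \<tau> (subst_sig \<sigma> B P)"
| "subst_sig \<sigma> B (Pref u v P) =
     (let B' = B - bd u v in
      Pref (map (subst_atom \<sigma> B') u) (map (subst_atom \<sigma> B') v) (subst_sig \<sigma> B' P))"

text \<open>Substitution P[N/Y] of a (closed) term N for the recursion variable Y.\<close>
fun subst_rec :: "nat \<Rightarrow> 's wterm \<Rightarrow> 's wterm \<Rightarrow> 's wterm" where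
  "subst_rec Y N (TVar Z) = (if Z = Y then N else TVar Z)"
| "subst_rec Y N (Seq P R) = Seq (subst_rec Y N P) (subst_rec Y N R)"
| "subst_rec Y N (Ten P R) = Ten (subst_rec Y N P) (subst_rec Y N R)"
| "subst_rec Y N (Plus P R) = Plus (subst_rec Y N P) (subst_rec Y N R)"
| "subst_rec Y N (Pref u v P) = Pref u v (subst_rec Y N P)"
| "subst_rec Y N (Mu Z \<tau> P) = (if Z = Y then Mu Z \<tau> P else Mu Z \<tau> (subst_rec Y N P))"

inductive wsort :: "(nat \<rightharpoonup> nat \<times> nat) \<Rightarrow> 's wterm \<Rightarrow> nat \<times> nat \<Rightarrow> bool" where
  sVar:  "\<Gamma> Y = Some \<tau> \<Longrightarrow> wsort \<Gamma> (TVar Y) \<tau>"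
| sSeq:  "wsort \<Gamma> P (k, n) \<Longrightarrow> wsort \<Gamma> R (n, l) \<Longrightarrow> wsort \<Gamma> (Seq P R) (k, l)"
| sTen:  "wsort \<Gamma> P (k, l) \<Longrightarrow> wsort \<Gamma> Q (m, n) \<Longrightarrow> wsort \<Gamma> (Ten P Q) (k + m, l + n)"
| sPref: "wsort \<Gamma> P (length u, length v) \<Longrightarrow> wsort \<Gamma> (Pref u v P) (length u, length v)"
| sMu:   "wsort (\<Gamma>(Y \<mapsto> \<tau>)) P \<tau> \<Longrightarrow> wsort \<Gamma> (Mu Y \<tau> P) \<tau>"
| sPlus: "wsort \<Gamma> P \<tau> \<Longrightarrow> wsort \<Gamma> Q \<tau> \<Longrightarrow> wsort \<Gamma> (Plus P Q) \<tau>"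

section \<open>Transitions  P --a/b--> Q  (a top/left word, b bottom/right word)\<close>

definition iotas :: "nat \<Rightarrow> 's lab list" where
  "iotas k = replicate k None"

definition all_iota :: "'s lab list \<Rightarrow> bool" where
  "all_iota w \<longleftrightarrow> (\<forall>c \<in> set w. c = None)"

inductive trans :: "'s wterm \<Rightarrow> 's lab list \<Rightarrow> 's lab list \<Rightarrow> 's wterm \<Rightarrow> bool" where
  Refl:   "wsort Map.empty P (k, l) \<Longrightarrow> trans P (iotas k) (iotas l) P"
| IotaL:  "trans P (iotas k) (iotas l) R \<Longrightarrow> trans R a b Q \<Longrightarrow> trans P a b Q"
| IotaR:  "trans P a b R \<Longrightarrow> trans R (iotas k) (iotas l) Q \<Longrightarrow> trans P a b Q"
| Cut:    "trans P a c Q \<Longrightarrow> trans R c b S \<Longrightarrow> trans (Seq P R) a b (Seq Q S)"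
| Tensor: "trans P a b Q \<Longrightarrow> trans R c d S \<Longrightarrow> trans (Ten P R) (a @ c) (b @ d) (Ten Q S)"
| Prefix: "trans (Pref u v P) (inst_word \<sigma> u) (inst_word \<sigma> v) (subst_sig \<sigma> (bd u v) P)"
| Rec:    "trans (subst_rec Y (Mu Y \<tau> P) P) a b Q \<Longrightarrow> trans (Mu Y \<tau> P) a b Q"
| PlusI:  "trans P (iotas k) (iotas l) Q \<Longrightarrow> trans R (iotas k) (iotas l) S
             \<Longrightarrow> trans (Plus P R) (iotas k) (iotas l) (Plus Q S)"
| PlusL:  "trans P a b Q \<Longrightarrow> \<not> all_iota (a @ b) \<Longrightarrow> trans (Plus P R) a b Q"
| PlusR:  "trans P a b Q \<Longrightarrow> \<not> all_iota (a @ b) \<Longrightarrow> trans (Plus R P) a b Q"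

definition bisimulation :: "('s wterm \<times> 's wterm) set \<Rightarrow> bool" where
  "bisimulation S \<longleftrightarrow>
     (\<forall>(P, Q) \<in> S.
        (\<forall>a b P'. trans P a b P' \<longrightarrow> (\<exists>Q'. trans Q a b Q' \<and> (P', Q') \<in> S)) \<and>
        (\<forall>a b Q'. trans Q a b Q' \<longrightarrow> (\<exists>P'. trans P a b P' \<and> (P', Q') \<in> S)))"

definition bisim :: "'s wterm \<Rightarrow> 's wterm \<Rightarrow> bool" (infix "\<sim>w" 50) where
  "P \<sim>w Q \<longleftrightarrow> (\<exists>S. (P, Q) \<in> S \<and> bisimulation S)"

definition zero :: "'s wterm" where
  "zero = Mu 0 (0, 0) (TVar 0)"

text \<open>I_k = mu Y. (lambda x1..lambda xk)/(lambda x1..lambda xk). Y  for k \<ge> 1, I_0 = 0;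
  signal variable x_i is named i, recursion variable Y is named 0.\<close>
definition Iw :: "nat \<Rightarrow> 's wterm" where
  "Iw k = (if k = 0 then zero
           else Mu 0 (k, k) (Pref (map ABind [1..<k+1]) (map ABind [1..<k+1]) (TVar 0)))"

definition dd :: "'s wterm" where
  "dd = Mu 0 (0, 2) (Pref [] [ABind 1, ABind 1] (TVar 0))"

definition ee :: "'s wterm" where
  "ee = Mu 0 (2, 0) (Pref [ABind 1, ABind 1] [] (TVar 0))"

text \<open>Tensor is read left-associatively: I (x) d_n (x) I = (I (x) d_n) (x) I.\<close>
fun dn :: "nat \<Rightarrow> 's wterm" where
  "dn 0 = zero"
| "dn (Suc 0) = dd"
| "dn (Suc (Suc n)) = Seq dd (Ten (Ten (Iw 1) (dn (Suc n))) (Iw 1))"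

fun en :: "nat \<Rightarrow> 's wterm" where
  "en 0 = zero"
| "en (Suc 0) = ee"
| "en (Suc (Suc n)) = Seq (Ten (Ten (Iw (Suc n)) ee) (Iw (Suc n))) (en (Suc n))"

end

theory Submission
  imports Defs
begin

(* The processes 0, I_n, d and e are stateless: after any transition they can still perform
   exactly the label pairs of a fixed relation on words, namely the diagonal on words of length n
   for I_n and the pairs ([], w @ rev w) and (w @ rev w, []) for d_n and e_n.  Being stateless in
   this sense is preserved by ";" (relational composition of the label relations) and by tensor
   (concatenation of label pairs), and two stateless processes with the same relation are
   bisimilar.  Both equations thus reduce to the snake identities for these relations on words. *)

coinductive exhibits :: "('s lab list \<times> 's lab list) set \<Rightarrow> 's wterm \<Rightarrow> bool" for R where
  "(\<forall>a b P'. trans P a b P' \<longrightarrow> (a, b) \<in> R \<and> exhibits R P') \<Longrightarrow>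
   (\<forall>a b. (a, b) \<in> R \<longrightarrow> (\<exists>P'. trans P a b P' \<and> exhibits R P')) \<Longrightarrow> exhibits R P"

lemma exhibits_trans:
  "exhibits R P \<Longrightarrow> trans P a b P' \<Longrightarrow> (a, b) \<in> R \<and> exhibits R P'"
  by (blast elim: exhibits.cases)

lemma exhibits_transE:
  assumes "exhibits R P" "(a, b) \<in> R"
  obtains P' where "trans P a b P'" "exhibits R P'"
  using assms by (blast elim: exhibits.cases)

lemma exhibits_by_invariant:
  assumes "P \<in> X"
    and "\<And>P a b P'. P \<in> X \<Longrightarrow> trans P a b P' \<Longrightarrow> (a, b) \<in> R \<and> P' \<in> X"
    and "\<And>P a b. P \<in> X \<Longrightarrow> (a, b) \<in> R \<Longrightarrow> \<exists>P'. trans P a b P' \<and> P' \<in> X"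
  shows "exhibits R P"
  using assms(1) by (coinduction arbitrary: P) (use assms(2,3) in blast)

lemma exhibits_match:
  assumes "exhibits R P" "exhibits R Q" "trans P a b P'"
  obtains Q' where "trans Q a b Q'" "exhibits R P'" "exhibits R Q'"
  using assms by (meson exhibits_trans exhibits_transE)

lemma exhibits_bisim:
  assumes "exhibits R P" "exhibits R Q"
  shows "P \<sim>w Q"
proof -
  let ?S = "{(P, Q). exhibits R P \<and> exhibits R Q}"
  have "bisimulation ?S"
    unfolding bisimulation_def by simp (meson exhibits_match)
  with assms show ?thesis
    unfolding bisim_def by (intro exI[where x = ?S]) simp
qed

inductive_cases wsort_SeqE: "wsort \<Gamma> (Seq P Q) \<tau>"
inductive_cases wsort_TenE: "wsort \<Gamma> (Ten P Q) \<tau>"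
inductive_cases wsort_MuE: "wsort \<Gamma> (Mu Y \<tau>' P) \<tau>"
inductive_cases wsort_PrefE: "wsort \<Gamma> (Pref u v P) \<tau>"

lemma iotas_add: "iotas (k + m) = iotas k @ iotas m"
  unfolding iotas_def by (simp add: replicate_add)

(* The iota-closure rules chain transitions through intermediate processes, so the induction needs
   the shape of the whole composite as an invariant, not just of the initial one. *)
lemma Seq_trans_in_relcomp:
  assumes "trans T a b T'" "T \<in> {Seq P Q | P Q. exhibits R1 P \<and> exhibits R2 Q}"
  shows "(a, b) \<in> R1 O R2 \<and> T' \<in> {Seq P Q | P Q. exhibits R1 P \<and> exhibits R2 Q}"
  using assms
proof (induction rule: trans.induct)
  case (Refl T k l)
  then obtain P Q where T: "T = Seq P Q" "exhibits R1 P" "exhibits R2 Q" by blast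
  from Refl.hyps T(1) obtain m where "wsort Map.empty P (k, m)" "wsort Map.empty Q (m, l)"
    by (auto elim: wsort_SeqE)
  then have "(iotas k, iotas m) \<in> R1" "(iotas m, iotas l) \<in> R2"
    using T exhibits_trans trans.Refl by blast+
  then show ?case using Refl.prems by blast
next
  case (Cut P a c P' Q b Q')
  then have "exhibits R1 P" "exhibits R2 Q" by auto
  with Cut.hyps have "(a, c) \<in> R1 \<and> exhibits R1 P'" "(c, b) \<in> R2 \<and> exhibits R2 Q'"
    by (simp_all add: exhibits_trans)
  then show ?case by blast
next
  case IotaL
  then show ?case by meson
next
  case IotaR
  then show ?case by meson
qed simp_all

lemma exhibits_Seq:
  assumes "exhibits R1 P" "exhibits R2 Q"
  shows "exhibits (R1 O R2) (Seq P Q)"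
proof (rule exhibits_by_invariant[where X = "{Seq P Q | P Q. exhibits R1 P \<and> exhibits R2 Q}"])
  fix T a b
  assume "T \<in> {Seq P Q | P Q. exhibits R1 P \<and> exhibits R2 Q}" "(a, b) \<in> R1 O R2"
  then obtain P Q c where T: "T = Seq P Q" "exhibits R1 P" "exhibits R2 Q"
    and "(a, c) \<in> R1" "(c, b) \<in> R2"
    by blast
  then obtain P' Q' where "trans P a c P'" "exhibits R1 P'" "trans Q c b Q'" "exhibits R2 Q'"
    by (meson exhibits_transE)
  with T show "\<exists>T'. trans T a b T' \<and> T' \<in> {Seq P Q | P Q. exhibits R1 P \<and> exhibits R2 Q}"
    using trans.Cut by blast
qed (use assms Seq_trans_in_relcomp in blast)+

definition tensor_rel ::
    "('a list \<times> 'b list) set \<Rightarrow> ('a list \<times> 'b list) set \<Rightarrow> ('a list \<times> 'b list) set" where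
  "tensor_rel R1 R2 = {(a @ c, b @ d) | a b c d. (a, b) \<in> R1 \<and> (c, d) \<in> R2}"

lemma Ten_trans_in_tensor_rel:
  assumes "trans T a b T'" "T \<in> {Ten P Q | P Q. exhibits R1 P \<and> exhibits R2 Q}"
  shows "(a, b) \<in> tensor_rel R1 R2 \<and> T' \<in> {Ten P Q | P Q. exhibits R1 P \<and> exhibits R2 Q}"
  using assms
proof (induction rule: trans.induct)
  case (Refl T k l)
  then obtain P Q where T: "T = Ten P Q" "exhibits R1 P" "exhibits R2 Q" by blast
  from Refl.hyps T(1) obtain k1 k2 l1 l2 where
    "wsort Map.empty P (k1, l1)" "wsort Map.empty Q (k2, l2)" "k = k1 + k2" "l = l1 + l2"
    by (auto elim: wsort_TenE)
  moreover from calculation have "(iotas k1, iotas l1) \<in> R1" "(iotas k2, iotas l2) \<in> R2"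
    using T exhibits_trans trans.Refl by blast+
  ultimately show ?case
    using Refl.prems unfolding tensor_rel_def by (auto simp: iotas_add)
next
  case (Tensor P a b P' Q c d Q')
  then have "exhibits R1 P" "exhibits R2 Q" by auto
  with Tensor.hyps have "(a, b) \<in> R1 \<and> exhibits R1 P'" "(c, d) \<in> R2 \<and> exhibits R2 Q'"
    by (simp_all add: exhibits_trans)
  then show ?case unfolding tensor_rel_def by blast
next
  case IotaL
  then show ?case by meson
next
  case IotaR
  then show ?case by meson
qed simp_all

lemma exhibits_Ten:
  assumes "exhibits R1 P" "exhibits R2 Q"
  shows "exhibits (tensor_rel R1 R2) (Ten P Q)"
proof (rule exhibits_by_invariant[where X = "{Ten P Q | P Q. exhibits R1 P \<and> exhibits R2 Q}"])
  fix T a b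
  assume "T \<in> {Ten P Q | P Q. exhibits R1 P \<and> exhibits R2 Q}" "(a, b) \<in> tensor_rel R1 R2"
  then obtain P Q a1 b1 a2 b2 where T: "T = Ten P Q" "exhibits R1 P" "exhibits R2 Q"
    and "(a1, b1) \<in> R1" "(a2, b2) \<in> R2" and ab: "a = a1 @ a2" "b = b1 @ b2"
    unfolding tensor_rel_def by blast
  then obtain P' Q' where "trans P a1 b1 P'" "exhibits R1 P'" "trans Q a2 b2 Q'" "exhibits R2 Q'"
    by (meson exhibits_transE)
  with T ab show "\<exists>T'. trans T a b T' \<and> T' \<in> {Ten P Q | P Q. exhibits R1 P \<and> exhibits R2 Q}"
    using trans.Tensor by blast
qed (use assms Ten_trans_in_tensor_rel in blast)+

definition prefix_rel :: "'s atom list \<Rightarrow> 's atom list \<Rightarrow> ('s lab list \<times> 's lab list) set" where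
  "prefix_rel u v = {(inst_word \<sigma> u, inst_word \<sigma> v) | \<sigma>. True}"

lemma map_subst_atom_binders [simp]: "set u \<subseteq> range ABind \<Longrightarrow> map (subst_atom \<sigma> B) u = u"
  by (induct u) auto

lemma loop_trans_in_prefix_rel:
  fixes u v :: "'s atom list" and Y :: nat
  defines "M \<equiv> Mu Y (length u, length v) (Pref u v (TVar Y))"
  assumes uv: "set u \<subseteq> range ABind" "set v \<subseteq> range ABind"
    and "trans T a b T'" "T \<in> {M, Pref u v M}"
  shows "(a, b) \<in> prefix_rel u v \<and> T' \<in> {M, Pref u v M}"
  using assms(4,5)
proof (induction rule: trans.induct)
  case (Refl T k l)
  then have "(k, l) = (length u, length v)"
    unfolding M_def by (auto elim: wsort_MuE wsort_PrefE)
  moreover have "inst_word (\<lambda>_. None) w = iotas (length w)" if "set w \<subseteq> range ABind" for w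
    using that unfolding inst_word_def iotas_def by (induct w) auto
  ultimately have "(iotas k, iotas l) \<in> prefix_rel u v"
    unfolding prefix_rel_def using uv by (metis (mono_tags, lifting) mem_Collect_eq prod.inject)
  then show ?case using Refl by blast
next
  case IotaL
  then show ?case by meson
next
  case IotaR
  then show ?case by meson
next
  case (Prefix u' v' P \<sigma>)
  then have "u' = u" "v' = v" "P = M" unfolding M_def by auto
  moreover have "subst_sig \<sigma> (bd u v) M = M"
    unfolding M_def using uv by (simp add: Let_def)
  ultimately show ?case unfolding prefix_rel_def by auto
next
  case (Rec Y' \<tau> P a b Q)
  then show ?case unfolding M_def by simp
qed (auto simp: M_def)

lemma exhibits_loop:
  fixes u v :: "'s atom list"
  assumes uv: "set u \<subseteq> range ABind" "set v \<subseteq> range ABind"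
  shows "exhibits (prefix_rel u v) (Mu Y (length u, length v) (Pref u v (TVar Y)))"
    (is "exhibits _ ?M")
proof (rule exhibits_by_invariant[where X = "{?M, Pref u v ?M}"])
  fix T a b
  assume T: "T \<in> {?M, Pref u v ?M}" and "(a, b) \<in> prefix_rel u v"
  then obtain \<sigma> where ab: "a = inst_word \<sigma> u" "b = inst_word \<sigma> v"
    unfolding prefix_rel_def by blast
  have "subst_sig \<sigma> (bd u v) ?M = ?M"
    using uv by (simp add: Let_def)
  then have unfold: "trans (Pref u v ?M) a b ?M"
    using trans.Prefix[of u v ?M \<sigma>] ab by simp
  then have "trans ?M a b ?M"
    by (intro trans.Rec) simp
  with unfold T show "\<exists>T'. trans T a b T' \<and> T' \<in> {?M, Pref u v ?M}"
    by blast
qed (use loop_trans_in_prefix_rel[OF uv] in blast)+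

lemma exhibits_zero: "exhibits {([], [])} zero"
proof (rule exhibits_by_invariant[where X = "{zero}"])
  fix T a b T'
  assume "T \<in> {zero}" "trans T a b T'"
  from this(2,1) show "(a, b) \<in> {([], [])} \<and> T' \<in> {zero}"
  proof (induction rule: trans.induct)
    case Refl
    then show ?case unfolding zero_def iotas_def by (auto elim: wsort_MuE)
  next
    case IotaL
    then show ?case by meson
  next
    case IotaR
    then show ?case by meson
  qed (auto simp: zero_def)
next
  have "wsort Map.empty zero (0, 0)"
    unfolding zero_def by (auto intro!: wsort.intros)
  then show "\<exists>T'. trans T a b T' \<and> T' \<in> {zero}" if "T \<in> {zero}" "(a, b) \<in> {([], [])}" for T a b
    using that trans.Refl unfolding iotas_def by fastforce
qed simp

definition rel_I :: "nat \<Rightarrow> ('a list \<times> 'a list) set" where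
  "rel_I n = {(w, w) | w. length w = n}"

definition rel_d :: "nat \<Rightarrow> ('a list \<times> 'a list) set" where
  "rel_d n = {([], w @ rev w) | w. length w = n}"

definition rel_e :: "nat \<Rightarrow> ('a list \<times> 'a list) set" where
  "rel_e n = {(w @ rev w, []) | w. length w = n}"

lemma rel_I_0: "rel_I 0 = {([], [])}" and rel_d_0: "rel_d 0 = {([], [])}"
  and rel_e_0: "rel_e 0 = {([], [])}"
  unfolding rel_I_def rel_d_def rel_e_def by auto

lemma prefix_rel_Iw: "prefix_rel (map ABind [1..<n + 1]) (map ABind [1..<n + 1]) = rel_I n"
proof (intro equalityI subsetI)
  fix x :: "'s lab list \<times> 's lab list"
  assume "x \<in> rel_I n"
  then obtain w where w: "x = (w, w)" "length w = n"
    unfolding rel_I_def by blast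
  then have "inst_word (\<lambda>i. w ! (i - 1)) (map ABind [1..<n + 1]) = w"
    unfolding inst_word_def by (intro nth_equalityI) (simp_all del: upt_Suc)
  with w(1) show "x \<in> prefix_rel (map ABind [1..<n + 1]) (map ABind [1..<n + 1])"
    unfolding prefix_rel_def by (intro CollectI exI[of _ "\<lambda>i. w ! (i - 1)"]) simp
qed (auto simp: prefix_rel_def rel_I_def inst_word_def)

lemma rel_d_1: "rel_d 1 = {([], [y, y]) | y. True}"
proof (intro equalityI subsetI)
  fix x :: "'a list \<times> 'a list"
  assume "x \<in> {([], [y, y]) | y. True}"
  then obtain y where "x = ([], [y] @ rev [y])" by auto
  then show "x \<in> rel_d 1" unfolding rel_d_def by fastforce
qed (auto simp: rel_d_def length_Suc_conv)

lemma rel_e_1: "rel_e 1 = {([y, y], []) | y. True}"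
proof (intro equalityI subsetI)
  fix x :: "'a list \<times> 'a list"
  assume "x \<in> {([y, y], []) | y. True}"
  then obtain y where "x = ([y] @ rev [y], [])" by auto
  then show "x \<in> rel_e 1" unfolding rel_e_def by fastforce
qed (auto simp: rel_e_def length_Suc_conv)

lemma prefix_rel_dd: "prefix_rel [] [ABind 1, ABind 1] = rel_d 1"
  unfolding prefix_rel_def rel_d_1 inst_word_def by auto

lemma prefix_rel_ee: "prefix_rel [ABind 1, ABind 1] [] = rel_e 1"
  unfolding prefix_rel_def rel_e_1 inst_word_def by auto

lemma exhibits_Iw: "exhibits (rel_I n) (Iw n :: 's wterm)"
proof (cases "n = 0")
  case True
  then show ?thesis
    using exhibits_zero unfolding Iw_def by (simp add: rel_I_0)
next
  case False
  let ?u = "map ABind [1..<n + 1] :: 's atom list"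
  have "exhibits (prefix_rel ?u ?u) (Mu 0 (length ?u, length ?u) (Pref ?u ?u (TVar 0)))"
    by (rule exhibits_loop) auto
  with False show ?thesis
    unfolding Iw_def prefix_rel_Iw by simp
qed

lemma exhibits_dd: "exhibits (rel_d 1) dd"
  using exhibits_loop[of "[]" "[ABind 1, ABind 1]" 0]
  unfolding dd_def prefix_rel_dd by (simp add: numeral_2_eq_2)

lemma exhibits_ee: "exhibits (rel_e 1) ee"
  using exhibits_loop[of "[ABind 1, ABind 1]" "[]" 0]
  unfolding ee_def prefix_rel_ee by (simp add: numeral_2_eq_2)

lemma rel_d_Suc:
  "rel_d 1 O tensor_rel (tensor_rel (rel_I 1) (rel_d m)) (rel_I 1) = rel_d (Suc m)"
proof (intro equalityI subsetI)
  fix x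
  assume "x \<in> rel_d 1 O tensor_rel (tensor_rel (rel_I 1) (rel_d m)) (rel_I 1)"
  then obtain a b c where x: "x = (a, b)" "(a, c) \<in> rel_d 1"
    and cb: "(c, b) \<in> tensor_rel (tensor_rel (rel_I 1) (rel_d m)) (rel_I 1)"
    by blast
  from x(2) obtain y where "a = []" "c = [y, y]"
    unfolding rel_d_1 by blast
  moreover from cb obtain p r w where "c = [p, r]" "b = [p] @ (w @ rev w) @ [r]" "length w = m"
    unfolding tensor_rel_def rel_I_def rel_d_def by (auto simp: length_Suc_conv)
  ultimately have "a = []" "b = (y # w) @ rev (y # w)" "length (y # w) = Suc m"
    by auto
  with x(1) show "x \<in> rel_d (Suc m)"
    unfolding rel_d_def by blast
next
  fix x
  assume "x \<in> rel_d (Suc m)"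
  then obtain y w where x: "x = ([], (y # w) @ rev (y # w))" and w: "length w = m"
    unfolding rel_d_def by (auto simp: length_Suc_conv)
  have "([], [y, y]) \<in> rel_d 1"
    unfolding rel_d_1 by blast
  moreover have "(([y] @ []) @ [y], ([y] @ (w @ rev w)) @ [y])
      \<in> tensor_rel (tensor_rel (rel_I 1) (rel_d m)) (rel_I 1)"
  proof -
    have "([y], [y]) \<in> rel_I 1" "([], w @ rev w) \<in> rel_d m"
      unfolding rel_I_def rel_d_def using w by auto
    then show ?thesis
      unfolding tensor_rel_def by blast
  qed
  ultimately show "x \<in> rel_d 1 O tensor_rel (tensor_rel (rel_I 1) (rel_d m)) (rel_I 1)"
    using x by auto
qed

lemma rel_e_Suc:
  "tensor_rel (tensor_rel (rel_I (Suc m)) (rel_e 1)) (rel_I (Suc m)) O rel_e (Suc m)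
     = rel_e (Suc (Suc m))"
proof (intro equalityI subsetI)
  fix x
  assume "x \<in> tensor_rel (tensor_rel (rel_I (Suc m)) (rel_e 1)) (rel_I (Suc m)) O rel_e (Suc m)"
  then obtain a b c where x: "x = (a, b)"
    and ac: "(a, c) \<in> tensor_rel (tensor_rel (rel_I (Suc m)) (rel_e 1)) (rel_I (Suc m))"
    and "(c, b) \<in> rel_e (Suc m)"
    by blast
  then obtain w where cb: "c = w @ rev w" "b = []" "length w = Suc m"
    unfolding rel_e_def by blast
  from ac obtain p y r where "a = p @ [y, y] @ r" "c = p @ r" "length p = Suc m" "length r = Suc m"
    unfolding tensor_rel_def rel_I_def rel_e_1 by auto
  with cb have "a = (w @ [y]) @ rev (w @ [y])"
    by (auto simp: append_eq_append_conv)
  with x cb show "x \<in> rel_e (Suc (Suc m))"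
    unfolding rel_e_def by (intro CollectI exI[of _ "w @ [y]"]) simp
next
  fix x
  assume "x \<in> rel_e (Suc (Suc m))"
  then obtain v where x: "x = (v @ rev v, [])" and "length v = Suc (Suc m)"
    unfolding rel_e_def by blast
  then obtain y w where v: "v = w @ [y]" and w: "length w = Suc m"
    by (cases v rule: rev_cases) auto
  have "(w @ rev w, []) \<in> rel_e (Suc m)"
    unfolding rel_e_def using w by blast
  moreover have "((w @ [y, y]) @ rev w, (w @ []) @ rev w)
      \<in> tensor_rel (tensor_rel (rel_I (Suc m)) (rel_e 1)) (rel_I (Suc m))"
  proof -
    have "(w, w) \<in> rel_I (Suc m)" "(rev w, rev w) \<in> rel_I (Suc m)" "([y, y], []) \<in> rel_e 1"
      unfolding rel_I_def rel_e_1 using w by auto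
    then show ?thesis
      unfolding tensor_rel_def by blast
  qed
  ultimately show "x \<in> tensor_rel (tensor_rel (rel_I (Suc m)) (rel_e 1)) (rel_I (Suc m)) O rel_e (Suc m)"
    using x v by auto
qed

lemma exhibits_dn: "exhibits (rel_d n) (dn n :: 's wterm)"
proof (induction n rule: dn.induct)
  case 1
  then show ?case using exhibits_zero by (simp add: rel_d_0)
next
  case 2
  then show ?case using exhibits_dd by simp
next
  case (3 n)
  have "exhibits (rel_d 1 O tensor_rel (tensor_rel (rel_I 1) (rel_d (Suc n))) (rel_I 1))
          (dn (Suc (Suc n)) :: 's wterm)"
    unfolding dn.simps by (intro exhibits_Seq exhibits_Ten exhibits_dd exhibits_Iw) (rule 3)
  then show ?case by (simp only: rel_d_Suc)
qed

lemma exhibits_en: "exhibits (rel_e n) (en n :: 's wterm)"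
proof (induction n rule: en.induct)
  case 1
  then show ?case using exhibits_zero by (simp add: rel_e_0)
next
  case 2
  then show ?case using exhibits_ee by simp
next
  case (3 n)
  have "exhibits (tensor_rel (tensor_rel (rel_I (Suc n)) (rel_e 1)) (rel_I (Suc n)) O rel_e (Suc n))
          (en (Suc (Suc n)) :: 's wterm)"
    unfolding en.simps by (intro exhibits_Seq exhibits_Ten exhibits_ee exhibits_Iw) (rule 3)
  then show ?case by (simp only: rel_e_Suc)
qed

lemma rel_yanking_dI_Ie: "tensor_rel (rel_d n) (rel_I n) O tensor_rel (rel_I n) (rel_e n) = rel_I n"
proof (intro equalityI subsetI)
  fix x
  assume "x \<in> tensor_rel (rel_d n) (rel_I n) O tensor_rel (rel_I n) (rel_e n)"
  then obtain a b c where x: "x = (a, b)" and ac: "(a, c) \<in> tensor_rel (rel_d n) (rel_I n)"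
    and cb: "(c, b) \<in> tensor_rel (rel_I n) (rel_e n)"
    by blast
  from ac obtain w p where a: "a = [] @ p" "c = (w @ rev w) @ p" "length w = n" "length p = n"
    unfolding tensor_rel_def rel_I_def rel_d_def by blast
  from cb obtain q v where b: "b = q @ []" "c = q @ (v @ rev v)" "length q = n" "length v = n"
    unfolding tensor_rel_def rel_I_def rel_e_def by blast
  from a b have "w = q" "rev w @ p = v @ rev v"
    by (auto simp: append_eq_append_conv)
  with a b have "a = b"
    by (auto simp: append_eq_append_conv)
  with x a show "x \<in> rel_I n"
    unfolding rel_I_def by simp
next
  fix x
  assume "x \<in> rel_I n"
  then obtain w where x: "x = (w, w)" and w: "length w = n"
    unfolding rel_I_def by blast
  have "([] @ w, (w @ rev w) @ w) \<in> tensor_rel (rel_d n) (rel_I n)"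
    unfolding tensor_rel_def rel_I_def rel_d_def using w by blast
  moreover have "(rev w @ rev (rev w), []) \<in> rel_e n"
    unfolding rel_e_def using w by (intro CollectI exI[of _ "rev w"]) simp
  then have "(w @ (rev w @ rev (rev w)), w @ []) \<in> tensor_rel (rel_I n) (rel_e n)"
    unfolding tensor_rel_def rel_I_def using w by blast
  ultimately show "x \<in> tensor_rel (rel_d n) (rel_I n) O tensor_rel (rel_I n) (rel_e n)"
    using x by auto
qed

lemma rel_yanking_Id_eI: "tensor_rel (rel_I n) (rel_d n) O tensor_rel (rel_e n) (rel_I n) = rel_I n"
proof (intro equalityI subsetI)
  fix x
  assume "x \<in> tensor_rel (rel_I n) (rel_d n) O tensor_rel (rel_e n) (rel_I n)"
  then obtain a b c where x: "x = (a, b)" and ac: "(a, c) \<in> tensor_rel (rel_I n) (rel_d n)"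
    and cb: "(c, b) \<in> tensor_rel (rel_e n) (rel_I n)"
    by blast
  from ac obtain w p where a: "a = p @ []" "c = p @ (w @ rev w)" "length w = n" "length p = n"
    unfolding tensor_rel_def rel_I_def rel_d_def by blast
  from cb obtain q v where b: "b = [] @ q" "c = (v @ rev v) @ q" "length q = n" "length v = n"
    unfolding tensor_rel_def rel_I_def rel_e_def by blast
  from a b have "p = v" "w @ rev w = rev v @ q"
    by (auto simp: append_eq_append_conv)
  with a b have "a = b"
    by (auto simp: append_eq_append_conv)
  with x a show "x \<in> rel_I n"
    unfolding rel_I_def by simp
next
  fix x
  assume "x \<in> rel_I n"
  then obtain w where x: "x = (w, w)" and w: "length w = n"
    unfolding rel_I_def by blast
  have "([], rev w @ rev (rev w)) \<in> rel_d n"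
    unfolding rel_d_def using w by (intro CollectI exI[of _ "rev w"]) simp
  then have "(w @ [], w @ (rev w @ rev (rev w))) \<in> tensor_rel (rel_I n) (rel_d n)"
    unfolding tensor_rel_def rel_I_def using w by blast
  moreover have "((w @ rev w) @ w, [] @ w) \<in> tensor_rel (rel_e n) (rel_I n)"
    unfolding tensor_rel_def rel_I_def rel_e_def using w by blast
  ultimately show "x \<in> tensor_rel (rel_I n) (rel_d n) O tensor_rel (rel_e n) (rel_I n)"
    using x by auto
qed

theorem mainTheorem5:
  fixes n :: nat
  shows "(Seq (Ten (dn n) (Iw n)) (Ten (Iw n) (en n)) :: 's wterm) \<sim>w Iw n
       \<and> (Iw n :: 's wterm) \<sim>w Seq (Ten (Iw n) (dn n)) (Ten (en n) (Iw n))"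
proof
  have "exhibits (tensor_rel (rel_d n) (rel_I n) O tensor_rel (rel_I n) (rel_e n))
          (Seq (Ten (dn n) (Iw n)) (Ten (Iw n) (en n)) :: 's wterm)"
    by (intro exhibits_Seq exhibits_Ten exhibits_dn exhibits_en exhibits_Iw)
  then have "exhibits (rel_I n) (Seq (Ten (dn n) (Iw n)) (Ten (Iw n) (en n)) :: 's wterm)"
    by (simp only: rel_yanking_dI_Ie)
  then show "(Seq (Ten (dn n) (Iw n)) (Ten (Iw n) (en n)) :: 's wterm) \<sim>w Iw n"
    using exhibits_Iw by (rule exhibits_bisim)
  have "exhibits (tensor_rel (rel_I n) (rel_d n) O tensor_rel (rel_e n) (rel_I n))
          (Seq (Ten (Iw n) (dn n)) (Ten (en n) (Iw n)) :: 's wterm)"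
    by (intro exhibits_Seq exhibits_Ten exhibits_dn exhibits_en exhibits_Iw)
  then have "exhibits (rel_I n) (Seq (Ten (Iw n) (dn n)) (Ten (en n) (Iw n)) :: 's wterm)"
    by (simp only: rel_yanking_Id_eI)
  with exhibits_Iw show "(Iw n :: 's wterm) \<sim>w Seq (Ten (Iw n) (dn n)) (Ten (en n) (Iw n))"
    by (rule exhibits_bisim)
qed

end
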